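(* For $n\ge1$ and $0\le i\le\lfloor (n-1)/2\rfloor$, $b(n+1,i+1,n)=P(n,i)$, where $P(n,i)$ is the number of permutations $\pi\in\mathfrak{S}_n$ with exactly $i$ interior peaks.
   Context: An interior peak of $\pi\in\mathfrak{S}_n$ is an index $m\in\{2,\dots,n-1\}$ with $\pi(m-1)<\pi(m)>\pi(m+1)$. The integers $b(n,i,j)$ ($n\ge1$) are defined by $b(1,0,0)=1$, $b(1,i,j)=0$ for $(i,j)\ne(0,0)$, $b(n,i,j)=0$ if $i<0$ or $j<0$, and $b(n+1,i,j)=b(n,i,j)+2i\,b(n,i,j-1)+(n-2i+2)\,b(n,i-1,j-1)$. *)

theory Defs
  imports "HOL-Combinatorics.Permutations"
begin

text \<open>The integers b(n,i,j) for n >= 1; the value at n = 0 is an unused dummy (0).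
  Indices i, j range over the integers; b vanishes for negative i or j.\<close>
fun b :: "nat \<Rightarrow> int \<Rightarrow> int \<Rightarrow> int" where
  "b 0 i j = 0"
| "b (Suc 0) i j = (if i = 0 \<and> j = 0 then 1 else 0)"
| "b (Suc (Suc n)) i j =
     (if i < 0 \<or> j < 0 then 0
      else b (Suc n) i j + 2 * i * b (Suc n) i (j - 1)
           + (int (Suc n) - 2 * i + 2) * b (Suc n) (i - 1) (j - 1))"

definition interior_peaks :: "nat \<Rightarrow> (nat \<Rightarrow> nat) \<Rightarrow> nat set" where
  "interior_peaks n \<pi> = {m \<in> {2..n-1}. \<pi> (m-1) < \<pi> m \<and> \<pi> m > \<pi> (m+1)}"

definition P :: "nat \<Rightarrow> nat \<Rightarrow> nat" where
  "P n i = card {\<pi>. \<pi> permutes {1..n} \<and> card (interior_peaks n \<pi>) = i}"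

end

theory Submission
  imports Defs
begin

text \<open>Inserting the new largest value \<open>n + 1\<close> into a permutation of \<open>{1..n}\<close> at one of its
  \<open>n + 1\<close> positions is a bijection onto the permutations of \<open>{1..n + 1}\<close>. If the permutation
  has \<open>k\<close> interior peaks, inserting at either end, at a peak or just after a peak keeps \<open>k\<close>
  peaks (\<open>2k + 2\<close> positions), while each of the other \<open>n - 1 - 2k\<close> positions creates one new
  peak. Hence \<open>P(n+1,i) = (2i+2) P(n,i) + (n+1-2i) P(n,i-1)\<close>. On the diagonal \<open>j = n\<close> the
  term \<open>b(n,i+1,n)\<close> of the recurrence for \<open>b(n+1,i+1,n)\<close> vanishes, and what remains is the
  same recurrence.\<close>

lemma b_eq_0_if_negative: "i < 0 \<or> j < 0 \<Longrightarrow> b m i j = 0"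
  by (cases "(m, i, j)" rule: b.cases) auto

lemma b_eq_0_if_ge: "m \<ge> 1 \<Longrightarrow> j \<ge> int m \<Longrightarrow> b m i j = 0"
proof (induction m i j rule: b.induct)
  case (3 n i j)
  then show ?case by (cases "n = 0") auto
qed auto

lemma b_at_i_0: "m \<ge> 1 \<Longrightarrow> b m 0 j = (if j = 0 then 1 else 0)"
proof (induction m "0::int" j rule: b.induct)
  case (3 n j)
  then show ?case by (cases "n = 0") (auto simp: b_eq_0_if_negative)
qed auto

lemma b_diagonal_rec:
  assumes "n \<ge> 2" and "i \<ge> 0"
  shows "b (n + 1) (i + 1) (int n)
    = 2 * (i + 1) * b n (i + 1) (int n - 1) + (int n - 2 * i) * b n i (int n - 1)"
proof -
  obtain k where k: "n = Suc (Suc k)"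
    using assms(1) by (metis add_2_eq_Suc le_Suc_ex)
  have "b n (i + 1) (int n) = 0"
    using k by (intro b_eq_0_if_ge) auto
  then show ?thesis
    using assms(2) unfolding k by (simp add: algebra_simps)
qed

lemma permutes_atLeastAtMost_le: "s permutes {1..N} \<Longrightarrow> (x::nat) \<le> N \<Longrightarrow> s x \<le> N"
  by (cases "x = 0") (auto simp: permutes_not_in dest: permutes_in_image[THEN iffD2, of s _ x])

text \<open>In one-line notation, \<open>insert_max N s p\<close> is \<open>s\<close> with the new largest value \<open>N + 1\<close>
  inserted at position \<open>p\<close>.\<close>
definition insert_max :: "nat \<Rightarrow> (nat \<Rightarrow> nat) \<Rightarrow> nat \<Rightarrow> nat \<Rightarrow> nat" where
  "insert_max N s p m =
    (if m < p then s m else if m = p then Suc N else if m \<le> Suc N then s (m - 1) else m)"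

lemma insert_max_at_other:
  "m \<noteq> p \<Longrightarrow> m \<le> Suc N \<Longrightarrow> insert_max N s p m = s (if m < p then m else m - 1)"
  by (simp add: insert_max_def)

lemma insert_max_eq_Suc_iff:
  assumes s: "s permutes {1..N}" and "p \<le> Suc N" and "m \<le> Suc N"
  shows "insert_max N s p m = Suc N \<longleftrightarrow> m = p"
proof (cases "m = p")
  case False
  then have "(if m < p then m else m - 1) \<le> N"
    using assms(2,3) by auto
  then show ?thesis
    using False assms(3) permutes_atLeastAtMost_le[OF s] by (fastforce simp: insert_max_at_other)
qed (simp add: insert_max_def)

lemma insert_max_permutes:
  assumes s: "s permutes {1..N}" and p: "p \<in> {1..Suc N}"
  shows "insert_max N s p permutes {1..Suc N}"
proof (rule bij_imp_permutes)
  have maps_to: "insert_max N s p ` {1..Suc N} \<subseteq> {1..Suc N}"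
  proof (clarify)
    fix x assume "x \<in> {1..Suc N}"
    then show "insert_max N s p x \<in> {1..Suc N}"
      using permutes_in_image[OF s, of x] permutes_in_image[OF s, of "x - 1"] p
      by (auto simp: insert_max_def)
  qed
  have "inj_on (insert_max N s p) {1..Suc N}"
  proof (rule inj_onI)
    fix x y
    assume x: "x \<in> {1..Suc N}" and y: "y \<in> {1..Suc N}"
      and eq: "insert_max N s p x = insert_max N s p y"
    show "x = y"
    proof (cases "x = p \<or> y = p")
      case True
      then show ?thesis
        using eq x y p insert_max_eq_Suc_iff[OF s] by (metis atLeastAtMost_iff)
    next
      case False
      then have "s (if x < p then x else x - 1) = s (if y < p then y else y - 1)"
        using eq x y by (simp add: insert_max_at_other)
      then have "(if x < p then x else x - 1) = (if y < p then y else y - 1)"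
        using permutes_inj[OF s] by (simp add: inj_eq)
      then show ?thesis
        using False x y by (simp split: if_splits)
    qed
  qed
  then show "bij_betw (insert_max N s p) {1..Suc N} {1..Suc N}"
    using endo_inj_surj[OF _ maps_to] by (simp add: bij_betw_def)
  show "insert_max N s p x = x" if "x \<notin> {1..Suc N}" for x
    using that p permutes_not_in[OF s, of x] by (auto simp: insert_max_def)
qed

lemma inj_on_insert_max:
  "inj_on (\<lambda>(s, p). insert_max N s p) ({s. s permutes {1..N}} \<times> {1..Suc N})"
proof (rule inj_onI, clarify)
  fix s p s' p'
  assume s: "s permutes {1..N}" and s': "s' permutes {1..N}"
    and p: "p \<in> {1..Suc N}" and p': "p' \<in> {1..Suc N}"
    and eq: "insert_max N s p = insert_max N s' p'"
  have "insert_max N s' p' p = Suc N"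
    using fun_cong[OF eq, of p] by (simp add: insert_max_def)
  then have "p = p'"
    using p p' insert_max_eq_Suc_iff[OF s'] by auto
  moreover have "s m = s' m" for m
  proof -
    consider "m < p" | "p \<le> m" "m \<le> N" | "N < m" by linarith
    then show ?thesis
    proof cases
      case 1
      then show ?thesis using fun_cong[OF eq, of m] \<open>p = p'\<close> by (simp add: insert_max_def)
    next
      case 2
      then show ?thesis using fun_cong[OF eq, of "Suc m"] \<open>p = p'\<close> by (simp add: insert_max_def)
    next
      case 3
      then show ?thesis using permutes_not_in[OF s, of m] permutes_not_in[OF s', of m] by auto
    qed
  qed
  ultimately show "s = s' \<and> p = p'" by auto
qed

lemma image_insert_max:
  "(\<lambda>(s, p). insert_max N s p) ` ({s. s permutes {1..N}} \<times> {1..Suc N})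
    = {s. s permutes {1..Suc N}}"
proof (rule card_subset_eq)
  show "finite {s. s permutes {1..Suc N}}"
    by (simp add: finite_permutations)
  show "(\<lambda>(s, p). insert_max N s p) ` ({s. s permutes {1..N}} \<times> {1..Suc N})
      \<subseteq> {s. s permutes {1..Suc N}}"
    using insert_max_permutes by auto
  show "card ((\<lambda>(s, p). insert_max N s p) ` ({s. s permutes {1..N}} \<times> {1..Suc N}))
      = card {s. s permutes {1..Suc N}}"
    unfolding card_image[OF inj_on_insert_max]
    by (simp add: card_cartesian_product card_permutations)
qed

lemma interior_peaks_subset: "interior_peaks N s \<subseteq> {2..N - 1}"
  by (auto simp: interior_peaks_def)

lemma finite_interior_peaks: "finite (interior_peaks N s)"
  using finite_subset[OF interior_peaks_subset] by blast

lemma Suc_notin_interior_peaks: "m \<in> interior_peaks N s \<Longrightarrow> Suc m \<notin> interior_peaks N s"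
  by (auto simp: interior_peaks_def)

lemma mem_interior_peaks_insert_max:
  assumes s: "s permutes {1..N}" and p: "p \<in> {1..Suc N}"
  shows "x \<in> interior_peaks (Suc N) (insert_max N s p) \<longleftrightarrow>
    (x = p \<and> 2 \<le> p \<and> p \<le> N) \<or> (Suc x < p \<and> x \<in> interior_peaks N s)
    \<or> (Suc p < x \<and> x - 1 \<in> interior_peaks N s)"
proof -
  have top: "insert_max N s p p = Suc N"
    by (simp add: insert_max_def)
  have below_top: "insert_max N s p m < Suc N" if "m \<noteq> p" "m \<le> Suc N" for m
    using insert_max_eq_Suc_iff[OF s, of p m] p that permutes_atLeastAtMost_le[OF s]
    by (simp add: insert_max_at_other less_Suc_eq_le)
  consider "x = p" | "Suc x = p" | "x = Suc p" | "Suc x < p" | "Suc p < x" "x \<le> N" | "N < x"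
    by linarith
  then show ?thesis
  proof cases
    case 1
    then show ?thesis
      using top below_top[of "x - 1"] below_top[of "x + 1"] p
      by (auto simp: interior_peaks_def)
  next
    case 2
    then show ?thesis
      using top below_top[of x] p by (auto simp: interior_peaks_def)
  next
    case 3
    then show ?thesis
      using top below_top[of x] by (auto simp: interior_peaks_def)
  next
    case 4
    then have "insert_max N s p (x - 1) = s (x - 1)" "insert_max N s p x = s x"
      "insert_max N s p (x + 1) = s (x + 1)"
      by (simp_all add: insert_max_def)
    then show ?thesis
      using 4 p by (auto simp: interior_peaks_def)
  next
    case 5
    then have "insert_max N s p (x - 1) = s (x - 1 - 1)" "insert_max N s p x = s (x - 1)"
      "insert_max N s p (x + 1) = s (x - 1 + 1)"
      by (simp_all add: insert_max_at_other)
    then show ?thesis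
      using 5 p by (auto simp: interior_peaks_def)
  next
    case 6
    then show ?thesis
      by (auto simp: interior_peaks_def)
  qed
qed

lemma card_interior_peaks_insert_max:
  assumes s: "s permutes {1..N}" and p: "p \<in> {1..Suc N}"
  defines "K \<equiv> interior_peaks N s"
  shows "card (interior_peaks (Suc N) (insert_max N s p)) =
    (if p \<in> {2..N} - (K \<union> Suc ` K) then Suc (card K) else card K)"
proof -
  \<comment> \<open>Peaks left of \<open>p - 1\<close> survive, peaks right of \<open>p\<close> move one step right, a peak at
    \<open>p - 1\<close> or \<open>p\<close> is lost, and \<open>p\<close> itself becomes a peak if it is interior.\<close>
  define T where "T = (if 2 \<le> p \<and> p \<le> N then {p} else {})"
  define A where "A = {x\<in>K. Suc x < p}"
  define B where "B = {x\<in>K. p < x}"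
  have fin: "finite K" "finite A" "finite B" "finite T"
    unfolding K_def A_def B_def T_def using finite_interior_peaks by auto
  have split_new: "interior_peaks (Suc N) (insert_max N s p) = T \<union> A \<union> Suc ` B"
    unfolding set_eq_iff mem_interior_peaks_insert_max[OF s p] T_def A_def B_def K_def
    by (auto simp: image_iff Suc_le_eq)
  have new: "card (interior_peaks (Suc N) (insert_max N s p)) = card T + card A + card B"
  proof -
    have "T \<inter> A = {}" "(T \<union> A) \<inter> Suc ` B = {}"
      by (auto simp: T_def A_def B_def)
    then show ?thesis
      using fin unfolding split_new by (simp add: card_Un_disjoint card_image)
  qed
  have split_old: "K = A \<union> B \<union> (K \<inter> {p - 1, p})"
    unfolding A_def B_def by auto
  have old: "card K = card A + card B + card (K \<inter> {p - 1, p})"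
  proof -
    have "A \<inter> B = {}" "(A \<union> B) \<inter> (K \<inter> {p - 1, p}) = {}"
      by (auto simp: A_def B_def)
    then show ?thesis
      using fin by (subst split_old) (simp add: card_Un_disjoint)
  qed
  have "K \<inter> {p - 1, p} = (if p \<in> K then {p} else if p - 1 \<in> K then {p - 1} else {})"
    using Suc_notin_interior_peaks[of "p - 1" N s] p unfolding K_def by auto
  moreover have "p \<in> Suc ` K \<longleftrightarrow> p - 1 \<in> K"
    using p by (cases p) auto
  moreover have "p \<in> K \<union> Suc ` K \<Longrightarrow> 2 \<le> p \<and> p \<le> N"
    unfolding K_def interior_peaks_def by auto
  ultimately show ?thesis
    using new old by (auto simp: T_def)
qed

lemma interior_peaks_with_successors:
  fixes N :: nat and s :: "nat \<Rightarrow> nat"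
  defines "K \<equiv> interior_peaks N s"
  shows "K \<union> Suc ` K \<subseteq> {2..N}" and "finite (K \<union> Suc ` K)"
    and "card (K \<union> Suc ` K) = 2 * card K"
proof -
  show sub: "K \<union> Suc ` K \<subseteq> {2..N}"
    unfolding K_def interior_peaks_def by auto
  then show "finite (K \<union> Suc ` K)"
    using finite_subset by blast
  have "K \<inter> Suc ` K = {}"
    using Suc_notin_interior_peaks unfolding K_def by blast
  then show "card (K \<union> Suc ` K) = 2 * card K"
    using finite_interior_peaks[of N s] by (simp add: K_def card_Un_disjoint card_image)
qed

lemma two_card_interior_peaks_le: "2 * card (interior_peaks N s) \<le> N - 1"
  using card_mono[OF _ interior_peaks_with_successors(1)] interior_peaks_with_successors(3)
  by fastforce

lemma card_positions_keeping_peaks: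
  assumes s: "s permutes {1..N}" and "N \<ge> 1"
  defines "K \<equiv> interior_peaks N s"
  shows "card {p \<in> {1..Suc N}. card (interior_peaks (Suc N) (insert_max N s p)) = card K}
    = 2 * card K + 2"
proof -
  define X where "X = K \<union> Suc ` K"
  have X: "X \<subseteq> {2..N}" "finite X" "card X = 2 * card K"
    using interior_peaks_with_successors[of N s] unfolding X_def K_def by auto
  have "{p \<in> {1..Suc N}. card (interior_peaks (Suc N) (insert_max N s p)) = card K}
      = {1, Suc N} \<union> X"
    using X(1) by (auto simp: card_interior_peaks_insert_max[OF s] K_def X_def split: if_splits)
  moreover have "{1, Suc N} \<inter> X = {}"
    using X(1) by auto
  ultimately show ?thesis
    using assms(2) X by (simp add: card_Un_disjoint)
qed

lemma card_positions_adding_peak: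
  assumes s: "s permutes {1..N}"
  defines "K \<equiv> interior_peaks N s"
  shows "card {p \<in> {1..Suc N}. card (interior_peaks (Suc N) (insert_max N s p)) = Suc (card K)}
    = N - 1 - 2 * card K"
proof -
  define X where "X = K \<union> Suc ` K"
  have X: "X \<subseteq> {2..N}" "finite X" "card X = 2 * card K"
    using interior_peaks_with_successors[of N s] unfolding X_def K_def by auto
  have "{p \<in> {1..Suc N}. card (interior_peaks (Suc N) (insert_max N s p)) = Suc (card K)}
      = {2..N} - X"
    by (auto simp: card_interior_peaks_insert_max[OF s] K_def X_def split: if_splits)
  then show ?thesis
    using X by (simp add: card_Diff_subset)
qed

lemma card_positions_with_peaks:
  assumes s: "s permutes {1..N}" and "N \<ge> 1"
  defines "k \<equiv> card (interior_peaks N s)"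
  shows "int (card {p \<in> {1..Suc N}. card (interior_peaks (Suc N) (insert_max N s p)) = i})
    = (if k = i then 2 * int i + 2 else 0) + (if Suc k = i then int N + 1 - 2 * int i else 0)"
proof -
  consider "i = k" | "i = Suc k" | "i \<noteq> k" "i \<noteq> Suc k" by blast
  then show ?thesis
  proof cases
    case 1
    then show ?thesis
      using card_positions_keeping_peaks[OF assms(1,2)] by (simp add: k_def)
  next
    case 2
    have "int (N - 1 - 2 * k) = int N + 1 - 2 * int i"
      using 2 two_card_interior_peaks_le[of N s] assms(2) unfolding k_def by linarith
    then show ?thesis
      using 2 card_positions_adding_peak[OF s] by (simp add: k_def)
  next
    case 3
    then have "{p \<in> {1..Suc N}. card (interior_peaks (Suc N) (insert_max N s p)) = i} = {}"
      using card_interior_peaks_insert_max[OF s] by (auto simp: k_def)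
    then show ?thesis
      using 3 by simp
  qed
qed

lemma P_Suc:
  assumes "N \<ge> 1"
  shows "int (P (Suc N) i) = (2 * int i + 2) * int (P N i) +
    (int N + 1 - 2 * int i) * int (card {s. s permutes {1..N} \<and> Suc (card (interior_peaks N s)) = i})"
proof -
  define S where "S = {s. s permutes {1..N}}"
  define F where "F = (\<lambda>(s, p). insert_max N s p)"
  define peaks_at where "peaks_at = (\<lambda>s p. card (interior_peaks (Suc N) (insert_max N s p)))"
  have "{\<pi>. \<pi> permutes {1..Suc N} \<and> card (interior_peaks (Suc N) \<pi>) = i}
      = {\<pi> \<in> F ` (S \<times> {1..Suc N}). card (interior_peaks (Suc N) \<pi>) = i}"
    using image_insert_max[of N] unfolding S_def F_def by simp
  also have "\<dots> = F ` {x \<in> S \<times> {1..Suc N}. card (interior_peaks (Suc N) (F x)) = i}"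
    by blast
  also have "{x \<in> S \<times> {1..Suc N}. card (interior_peaks (Suc N) (F x)) = i}
      = (SIGMA s:S. {p \<in> {1..Suc N}. peaks_at s p = i})"
    by (auto simp: F_def peaks_at_def)
  finally have "P (Suc N) i = card (F ` (SIGMA s:S. {p \<in> {1..Suc N}. peaks_at s p = i}))"
    unfolding P_def by simp
  also have "\<dots> = card (SIGMA s:S. {p \<in> {1..Suc N}. peaks_at s p = i})"
    using inj_on_insert_max[of N] unfolding F_def S_def
    by (intro card_image) (rule inj_on_subset, auto)
  also have "\<dots> = (\<Sum>s\<in>S. card {p \<in> {1..Suc N}. peaks_at s p = i})"
    by (simp add: S_def finite_permutations)
  finally have "int (P (Suc N) i) = (\<Sum>s\<in>S. int (card {p \<in> {1..Suc N}. peaks_at s p = i}))"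
    by simp
  also have "\<dots> = (\<Sum>s\<in>S. (if card (interior_peaks N s) = i then 2 * int i + 2 else 0)
      + (if Suc (card (interior_peaks N s)) = i then int N + 1 - 2 * int i else 0))"
    using card_positions_with_peaks[OF _ assms] by (simp add: S_def peaks_at_def)
  also have "\<dots> = (2 * int i + 2) * int (card {s \<in> S. card (interior_peaks N s) = i})
      + (int N + 1 - 2 * int i) * int (card {s \<in> S. Suc (card (interior_peaks N s)) = i})"
    by (simp add: sum.distrib sum.inter_filter[symmetric] S_def finite_permutations)
  finally show ?thesis
    unfolding S_def P_def by simp
qed

lemma P_1: "P 1 i = (if i = 0 then 1 else 0)"
proof -
  have "{\<pi>. \<pi> permutes {1..1::nat} \<and> card (interior_peaks 1 \<pi>) = i} = (if i = 0 then {id} else {})"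
    by (auto simp: interior_peaks_def)
  then show ?thesis
    unfolding P_def by simp
qed

lemma b_diagonal_eq_P: "n \<ge> 1 \<Longrightarrow> b (n + 1) (int i + 1) (int n) = int (P n i)"
proof (induction n arbitrary: i rule: nat_induct_at_least)
  case base
  then show ?case
    using P_1[of i] by (simp add: numeral_2_eq_2)
next
  case (Suc N)
  have shifted: "b (Suc N) (int i) (int N)
      = int (card {s. s permutes {1..N} \<and> Suc (card (interior_peaks N s)) = i})"
  proof (cases i)
    case 0
    then show ?thesis
      using b_at_i_0[of "Suc N" "int N"] Suc.hyps by simp
  next
    case (Suc j)
    then show ?thesis
      using Suc.IH[of j] unfolding P_def by (simp add: add.commute)
  qed
  have "b (Suc N + 1) (int i + 1) (int (Suc N))
      = 2 * (int i + 1) * b (Suc N) (int i + 1) (int N) + (int N + 1 - 2 * int i) * b (Suc N) (int i) (int N)"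
    using b_diagonal_rec[of "Suc N" "int i"] Suc.hyps by simp
  also have "\<dots> = int (P (Suc N) i)"
    using Suc.IH[of i] shifted P_Suc[OF Suc.hyps, of i] by (simp add: algebra_simps)
  finally show ?case .
qed

theorem corollary7:
  fixes n i :: nat
  assumes "n \<ge> 1" and "i \<le> (n - 1) div 2"
  shows "b (n + 1) (int i + 1) (int n) = int (P n i)"
  using b_diagonal_eq_P[OF assms(1)] .

end
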